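(* Let $n\ge 3$ and let $p(q)=q^n+a_{n-2}q^{n-2}+\dots+a_1q+a_0$ with $a_0,\dots,a_{n-2}\in\mathbb{H}$ and $a_{n-2}\neq 0$. Put $\lambda=\big(\max_{0\le j\le n-2}|a_j|\big)^{1/n}$. Then every zero $q\in\mathbb{H}$ of $p$ satisfies $$|q|\le \lambda+\lambda^2+\lambda^3+\dots+\lambda^{n-1}.$$
   Context: $\mathbb{H}$ denotes the real quaternions with the Euclidean norm $|q|=\sqrt{q\bar q}$. The polynomial $p$ has coefficients written to the left of the powers and is evaluated at $q\in\mathbb{H}$ by direct substitution; a zero of $p$ is a $q\in\mathbb{H}$ with $p(q)=0$. *)

theory Defs
  imports Complex_Main
begin

codatatype quat = Quat (Re: real) (Im1: real) (Im2: real) (Im3: real)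

lemma quat_eqI [intro?]:
  "\<lbrakk>Re x = Re y; Im1 x = Im1 y; Im2 x = Im2 y; Im3 x = Im3 y\<rbrakk> \<Longrightarrow> x = y"
  by (rule quat.expand) simp

instantiation quat :: ring_1
begin

primcorec zero_quat where
  "Re 0 = 0" | "Im1 0 = 0" | "Im2 0 = 0" | "Im3 0 = 0"

primcorec one_quat where
  "Re 1 = 1" | "Im1 1 = 0" | "Im2 1 = 0" | "Im3 1 = 0"

primcorec plus_quat where
  "Re (x + y) = Re x + Re y" | "Im1 (x + y) = Im1 x + Im1 y"
| "Im2 (x + y) = Im2 x + Im2 y" | "Im3 (x + y) = Im3 x + Im3 y"

primcorec uminus_quat where
  "Re (- x) = - Re x" | "Im1 (- x) = - Im1 x"
| "Im2 (- x) = - Im2 x" | "Im3 (- x) = - Im3 x"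

primcorec minus_quat where
  "Re (x - y) = Re x - Re y" | "Im1 (x - y) = Im1 x - Im1 y"
| "Im2 (x - y) = Im2 x - Im2 y" | "Im3 (x - y) = Im3 x - Im3 y"

primcorec times_quat where
  "Re (a * b) = Re a * Re b - Im1 a * Im1 b - Im2 a * Im2 b - Im3 a * Im3 b"
| "Im1 (a * b) = Re a * Im1 b + Im1 a * Re b + Im2 a * Im3 b - Im3 a * Im2 b"
| "Im2 (a * b) = Re a * Im2 b - Im1 a * Im3 b + Im2 a * Re b + Im3 a * Im1 b"
| "Im3 (a * b) = Re a * Im3 b + Im1 a * Im2 b - Im2 a * Im1 b + Im3 a * Re b"

instance
  by standard (auto intro: quat_eqI simp: algebra_simps dest: arg_cong[where f=Re])

end

definition qnorm :: "quat \<Rightarrow> real" where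
  "qnorm q = sqrt ((Re q)\<^sup>2 + (Im1 q)\<^sup>2 + (Im2 q)\<^sup>2 + (Im3 q)\<^sup>2)"

end

theory Submission
  imports Defs
begin

text \<open>Multiplicativity and the triangle inequality for the quaternion norm turn \<open>p(q) = 0\<close> into
  \<open>r\<^sup>n \<le> \<lambda>\<^sup>n (1 + r + \<dots> + r\<^sup>n\<^sup>-\<^sup>2)\<close> for \<open>r = |q|\<close>. If \<open>r\<close> exceeded
  \<open>\<lambda> s\<close> with \<open>s = 1 + \<lambda> + \<dots> + \<lambda>\<^sup>n\<^sup>-\<^sup>2 \<ge> 1\<close>, then \<open>t = r/\<lambda> > s\<close> and
  \<open>\<Sum>\<^sub>j \<lambda>\<^sup>j t\<^sup>j \<le> t\<^sup>n\<^sup>-\<^sup>2 s < t\<^sup>n\<close>, contradicting that inequality after multiplying by \<open>\<lambda>\<^sup>n\<close>.\<close>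

lemma qnorm_nonneg: "qnorm x \<ge> 0"
  unfolding qnorm_def by simp

lemma qnorm_one [simp]: "qnorm 1 = 1"
  unfolding qnorm_def by simp

lemma qnorm_uminus [simp]: "qnorm (- x) = qnorm x"
  unfolding qnorm_def by simp

lemma qnorm_mult: "qnorm (x * y) = qnorm x * qnorm y"
proof -
  have "(Re (x*y))\<^sup>2 + (Im1 (x*y))\<^sup>2 + (Im2 (x*y))\<^sup>2 + (Im3 (x*y))\<^sup>2
     = ((Re x)\<^sup>2 + (Im1 x)\<^sup>2 + (Im2 x)\<^sup>2 + (Im3 x)\<^sup>2) * ((Re y)\<^sup>2 + (Im1 y)\<^sup>2 + (Im2 y)\<^sup>2 + (Im3 y)\<^sup>2)"
    by (simp add: power2_eq_square algebra_simps)
  then show ?thesis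
    unfolding qnorm_def by (simp add: real_sqrt_mult)
qed

lemma qnorm_power: "qnorm (x ^ k) = qnorm x ^ k"
  by (induction k) (simp_all add: qnorm_mult)

lemma cauchy_schwarz_4:
  fixes a1 a2 a3 a4 b1 b2 b3 b4 :: real
  shows "a1*b1 + a2*b2 + a3*b3 + a4*b4
    \<le> sqrt (a1\<^sup>2 + a2\<^sup>2 + a3\<^sup>2 + a4\<^sup>2) * sqrt (b1\<^sup>2 + b2\<^sup>2 + b3\<^sup>2 + b4\<^sup>2)"
proof -
  text \<open>Lagrange's identity.\<close>
  have "(a1\<^sup>2 + a2\<^sup>2 + a3\<^sup>2 + a4\<^sup>2) * (b1\<^sup>2 + b2\<^sup>2 + b3\<^sup>2 + b4\<^sup>2) - (a1*b1 + a2*b2 + a3*b3 + a4*b4)\<^sup>2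
      = (a1*b2-a2*b1)\<^sup>2 + (a1*b3-a3*b1)\<^sup>2 + (a1*b4-a4*b1)\<^sup>2 + (a2*b3-a3*b2)\<^sup>2
        + (a2*b4-a4*b2)\<^sup>2 + (a3*b4-a4*b3)\<^sup>2"
    by (simp add: power2_eq_square algebra_simps)
  then have "(a1*b1 + a2*b2 + a3*b3 + a4*b4)\<^sup>2
      \<le> (a1\<^sup>2 + a2\<^sup>2 + a3\<^sup>2 + a4\<^sup>2) * (b1\<^sup>2 + b2\<^sup>2 + b3\<^sup>2 + b4\<^sup>2)"
    by (metis diff_ge_0_iff_ge sum_squares_ge_zero zero_le_power2 add_nonneg_nonneg)
  then have "sqrt ((a1*b1 + a2*b2 + a3*b3 + a4*b4)\<^sup>2)
      \<le> sqrt ((a1\<^sup>2 + a2\<^sup>2 + a3\<^sup>2 + a4\<^sup>2) * (b1\<^sup>2 + b2\<^sup>2 + b3\<^sup>2 + b4\<^sup>2))"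
    by (rule real_sqrt_le_mono)
  then show ?thesis
    by (simp add: real_sqrt_mult)
qed

lemma qnorm_triangle: "qnorm (x + y) \<le> qnorm x + qnorm y"
proof -
  define A where "A = (Re x)\<^sup>2 + (Im1 x)\<^sup>2 + (Im2 x)\<^sup>2 + (Im3 x)\<^sup>2"
  define B where "B = (Re y)\<^sup>2 + (Im1 y)\<^sup>2 + (Im2 y)\<^sup>2 + (Im3 y)\<^sup>2"
  have nonneg: "A \<ge> 0" "B \<ge> 0"
    unfolding A_def B_def by simp_all
  have "(Re (x+y))\<^sup>2 + (Im1 (x+y))\<^sup>2 + (Im2 (x+y))\<^sup>2 + (Im3 (x+y))\<^sup>2
      = A + B + 2 * (Re x * Re y + Im1 x * Im1 y + Im2 x * Im2 y + Im3 x * Im3 y)"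
    unfolding A_def B_def by (simp add: power2_eq_square algebra_simps)
  also have "\<dots> \<le> (sqrt A + sqrt B)\<^sup>2"
    using cauchy_schwarz_4[of "Re x" "Re y" "Im1 x" "Im1 y" "Im2 x" "Im2 y" "Im3 x" "Im3 y",
        folded A_def B_def] nonneg
    by (simp add: power2_eq_square algebra_simps)
  finally have "sqrt ((Re (x+y))\<^sup>2 + (Im1 (x+y))\<^sup>2 + (Im2 (x+y))\<^sup>2 + (Im3 (x+y))\<^sup>2)
      \<le> sqrt ((sqrt A + sqrt B)\<^sup>2)"
    by (rule real_sqrt_le_mono)
  then show ?thesis
    unfolding qnorm_def A_def[symmetric] B_def[symmetric] using nonneg by simp
qed

lemma qnorm_sum: "qnorm (\<Sum>j\<in>S. f j) \<le> (\<Sum>j\<in>S. qnorm (f j))"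
proof (induction S rule: infinite_finite_induct)
  case (insert x F)
  then show ?case
    using qnorm_triangle[of "f x" "sum f F"] by simp
qed (simp_all add: qnorm_def)

lemma qnorm_power_le_of_root:
  fixes a :: "nat \<Rightarrow> quat"
  assumes root: "q ^ n + (\<Sum>j\<le>m. a j * q ^ j) = 0"
    and bound: "\<And>j. j \<le> m \<Longrightarrow> qnorm (a j) \<le> M"
  shows "qnorm q ^ n \<le> M * (\<Sum>j\<le>m. qnorm q ^ j)"
proof -
  have "qnorm q ^ n = qnorm (\<Sum>j\<le>m. a j * q ^ j)"
    using root by (metis qnorm_power qnorm_uminus add_eq_0_iff)
  also have "\<dots> \<le> (\<Sum>j\<le>m. qnorm (a j) * qnorm q ^ j)"
    by (rule order_trans[OF qnorm_sum]) (simp add: qnorm_mult qnorm_power)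
  also have "\<dots> \<le> (\<Sum>j\<le>m. M * qnorm q ^ j)"
    by (intro sum_mono mult_right_mono bound) (simp_all add: qnorm_nonneg)
  finally show ?thesis
    by (simp add: sum_distrib_left)
qed

lemma le_geometric_sum_if_power_le:
  fixes r l :: real
  assumes "r \<ge> 0" "l \<ge> 0"
    and power_le: "r ^ (m + 2) \<le> l ^ (m + 2) * (\<Sum>j\<le>m. r ^ j)"
  shows "r \<le> (\<Sum>k=1..m+1. l ^ k)"
proof -
  define s where "s = (\<Sum>k\<le>m. l ^ k)"
  have s_ge_1: "s \<ge> 1"
    unfolding s_def using sum_mono2[of "{..m}" "{0}" "\<lambda>k. l ^ k"] \<open>l \<ge> 0\<close> by simp
  have geometric: "(\<Sum>k=1..m+1. l ^ k) = l * s"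
    unfolding s_def sum_distrib_left
    by (simp add: sum.shift_bounds_cl_Suc_ivl[of "\<lambda>k. l ^ k" 0 m, simplified] atLeast0AtMost)
  show ?thesis
  proof (rule ccontr)
    assume "\<not> ?thesis"
    then have "r > l * s"
      using geometric by simp
    show False
    proof (cases "l = 0")
      case True
      then have "r ^ (m + 2) > 0"
        using \<open>r > l * s\<close> by simp
      with power_le True show False
        by simp
    next
      case False
      define t where "t = r / l"
      have r_eq: "r = l * t" and l_pos: "l > 0"
        using False \<open>l \<ge> 0\<close> by (simp_all add: t_def)
      have "t > s"
        using \<open>r > l * s\<close> l_pos r_eq by simp
      then have "t \<ge> 1"
        using s_ge_1 by simp
      have "(\<Sum>j\<le>m. r ^ j) = (\<Sum>j\<le>m. l ^ j * t ^ j)"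
        by (simp add: r_eq power_mult_distrib)
      also have "\<dots> \<le> (\<Sum>j\<le>m. l ^ j * t ^ m)"
        using \<open>t \<ge> 1\<close> l_pos by (intro sum_mono mult_left_mono power_increasing) auto
      also have "\<dots> = t ^ m * s"
        by (simp add: s_def sum_distrib_left mult.commute)
      also have "\<dots> < t ^ m * t * t"
        using \<open>t > s\<close> \<open>t \<ge> 1\<close> s_ge_1
        by (smt (verit) mult_le_cancel_left1 mult_strict_left_mono one_le_power)
      finally have "l ^ (m + 2) * (\<Sum>j\<le>m. r ^ j) < l ^ (m + 2) * t ^ (m + 2)"
        using l_pos by (simp add: power_add power2_eq_square mult_ac)
      also have "\<dots> = r ^ (m + 2)"
        by (simp add: r_eq power_mult_distrib)
      finally show False
        using power_le by simp
    qed
  qed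
qed

theorem corollary2:
  fixes n :: nat and a :: "nat \<Rightarrow> quat" and q :: quat
  assumes "n \<ge> 3"
    and "a (n - 2) \<noteq> 0"
    and "q ^ n + (\<Sum>j\<le>n - 2. a j * q ^ j) = 0"
  shows "qnorm q \<le>
    (let lam = root n (Max {qnorm (a j) | j. j \<le> n - 2}) in \<Sum>k=1..n-1. lam ^ k)"
proof -
  define m where "m = n - 2"
  define M where "M = Max {qnorm (a j) | j. j \<le> m}"
  have n_eq: "n = m + 2"
    using \<open>n \<ge> 3\<close> by (simp add: m_def)
  have coeff_le: "qnorm (a j) \<le> M" if "j \<le> m" for j
    unfolding M_def using that by (intro Max_ge) auto
  then have "M \<ge> 0"
    using qnorm_nonneg order_trans by blast
  then have root_pow: "root n M ^ n = M"
    using n_eq by (intro real_root_pow_pos2) simp_all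
  have "qnorm q ^ n \<le> root n M ^ n * (\<Sum>j\<le>m. qnorm q ^ j)"
    using qnorm_power_le_of_root[OF assms(3)[folded m_def] coeff_le] root_pow by simp
  then have "qnorm q \<le> (\<Sum>k=1..m+1. root n M ^ k)"
    using le_geometric_sum_if_power_le qnorm_nonneg \<open>M \<ge> 0\<close> n_eq by simp
  moreover have "n - 1 = m + 1"
    using n_eq by simp
  ultimately show ?thesis
    unfolding Let_def m_def[symmetric] M_def[symmetric] by simp
qed

end
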